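(* Let $(A,E,\langle\!\langle-,-\rangle\!\rangle,\partial,[\![-,-]\!])$ be a double Courant--Dorfman algebra. Then for all $e,f,g\in E$, $$\langle\!\langle e,[\![f,g]\!]\rangle\!\rangle_L-\langle\!\langle f,\partial\langle\!\langle e,g\rangle\!\rangle\rangle\!\rangle_R-\langle\!\langle[\![e,f]\!],g\rangle\!\rangle_L+\langle\!\langle\partial\langle\!\langle e,f\rangle\!\rangle,g\rangle\!\rangle_L=0\quad\text{in }A^{\otimes3}.$$
   Context: All algebras are associative unital $\Bbbk$-algebras, $\Bbbk$ a field of characteristic zero, $\otimes=\otimes_\Bbbk$. Sweedler notation: $x=x'\otimes x''$ with summation suppressed; $(x'\otimes x'')^\sigma=x''\otimes x'$. Outer structure on $A\otimes A$, $E\otimes A$, $A\otimes E$: $a(x'\otimes x'')b=ax'\otimes x''b$; inner structure on $A\otimes A$: $a*(x'\otimes x'')*b=x'b\otimes ax''$. For $x=x'\otimes x''$ and $y$: $x\otimes_1y:=x'\otimes y\otimes x''$, $y\otimes_1x:=x'\otimes y\otimes x''$. $A$ is an algebra, $E$ an $A$-bimodule, $\partial\colon A\to E$ a derivation, acting on $A\otimes A$ by $\partial(x'\otimes x'')=\partial x'\otimes x''+x'\otimes\partial x''\in E\otimes A\oplus A\otimes E$. A pairing $\langle\!\langle-,-\rangle\!\rangle\colon E\otimes E\to A\otimes A$ is linear with $f\mapsto\langle\!\langle e,f\rangle\!\rangle$ a bimodule map to $(A\otimes A)_{\mathrm{out}}$ and $f\mapsto\langle\!\langle f,e\rangle\!\rangle$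 a bimodule map to $(A\otimes A)_{\mathrm{inn}}$; symmetric: $\langle\!\langle e,f\rangle\!\rangle=\langle\!\langle f,e\rangle\!\rangle^\sigma$. Extensions to $A^{\otimes3}$-valued maps (additive in the tensor argument): $\langle\!\langle e,f\otimes a\rangle\!\rangle_L=\langle\!\langle e,f\rangle\!\rangle\otimes a$, $\langle\!\langle e,a\otimes f\rangle\!\rangle_L=0$, $\langle\!\langle e,a\otimes f\rangle\!\rangle_R=a\otimes\langle\!\langle e,f\rangle\!\rangle$, $\langle\!\langle e,f\otimes a\rangle\!\rangle_R=0$, $\langle\!\langle e\otimes a,f\rangle\!\rangle_L=\langle\!\langle a\otimes e,f\rangle\!\rangle_R=\langle\!\langle e,f\rangle\!\rangle'\otimes a\otimes\langle\!\langle e,f\rangle\!\rangle''$, $\langle\!\langle a\otimes e,f\rangle\!\rangle_L=\langle\!\langle e\otimes a,f\rangle\!\rangle_R=0$. A double Courant--Dorfman bracket is a linear map $[\![-,-]\!]\colon T_AE\otimes T_AE\to T_AE\otimes T_AE$ of degree $-1$ ($T_AE$ the tensor algebra, $E$ in degree 1) with $[\![e,a]\!]=\langle\!\langle e,\partial a\rangle\!\rangle$, $[\![a,e]\!]=-\langle\!\langle\partial a,e\rangle\!\rangle$, $[\![a,b]\!]=0$; for $e,f\in E$, $[\![e,f]\!]=[\![e,f]\!]_l+[\![e,f]\!]_r\in E\otimes A\oplus A\otimes E$. Extensions: $[\![e,f\otimes a]\!]_L=[\![e,f]\!]\otimes a$, $[\![e,a\otimes f]\!]_L=\langle\!\langle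 e,\partial a\rangle\!\rangle\otimes f$, $[\![e,f\otimes a]\!]_R=f\otimes\langle\!\langle e,\partial a\rangle\!\rangle$, $[\![e,a\otimes f]\!]_R=a\otimes[\![e,f]\!]$, $[\![e\otimes a,f]\!]_L=[\![e,f]\!]\otimes_1a+\langle\!\langle e,f\rangle\!\rangle\otimes_1\partial a$, $[\![a\otimes e,f]\!]_L=-\langle\!\langle\partial a,f\rangle\!\rangle\otimes_1e$. A double Courant--Dorfman algebra is $(A,E,\langle\!\langle-,-\rangle\!\rangle,\partial,[\![-,-]\!])$ with symmetric pairing, derivation and double Courant--Dorfman bracket such that for all $a,b\in A$, $e,f,g\in E$: $\partial\langle\!\langle e,f\rangle\!\rangle=[\![e,f]\!]+[\![f,e]\!]^\sigma$; $[\![\partial a,e]\!]=0$; $\langle\!\langle\partial a,\partial b\rangle\!\rangle=0$; $[\![e,fa]\!]=[\![e,f]\!]a+f\langle\!\langle e,\partial a\rangle\!\rangle$; $[\![e,af]\!]=a[\![e,f]\!]+\langle\!\langle e,\partial a\rangle\!\rangle f$; $[\![e,[\![f,g]\!]]\!]_L=[\![f,[\![e,g]\!]]\!]_R+[\![[\![e,f]\!],g]\!]_L$; $\langle\!\langle e,\partial\langle\!\langle f,g\rangle\!\rangle\rangle\!\rangle_L=\langle\!\langle f,[\![e,g]\!]\rangle\!\rangle_R+\langle\!\langle[\![e,f]\!],g\rangle\!\rangle_L$. *)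

theory Defs
  imports Complex_Main "HOL-Library.Function_Algebras" "HOL-Library.Product_Plus"
begin

text \<open>
The tensor product V \<otimes> W (over k) is modelled concretely, via the canonical injection
of V \<otimes> W into the algebraic dual of the space of bilinear forms on V \<times> W:
v \<otimes> w is the functional  \<beta> \<mapsto> \<beta> v w  (and 0 on non-bilinear arguments).
V \<otimes> W is the set of finite sums of such pure tensors, with pointwise operations.
The same is done for triple tensor products U \<otimes> V \<otimes> W via trilinear forms.
\<close>

definition klin :: "('k::field \<Rightarrow> 'v::ab_group_add \<Rightarrow> 'v) \<Rightarrow> ('v \<Rightarrow> 'k) \<Rightarrow> bool" where
  "klin sV f \<longleftrightarrow> (\<forall>x y. f (x + y) = f x + f y) \<and> (\<forall>c x. f (sV c x) = c * f x)"

definition bil ::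
  "('k::field \<Rightarrow> 'v::ab_group_add \<Rightarrow> 'v) \<Rightarrow> ('k \<Rightarrow> 'w::ab_group_add \<Rightarrow> 'w)
     \<Rightarrow> ('v \<Rightarrow> 'w \<Rightarrow> 'k) \<Rightarrow> bool" where
  "bil sV sW \<beta> \<longleftrightarrow> (\<forall>w. klin sV (\<lambda>v. \<beta> v w)) \<and> (\<forall>v. klin sW (\<lambda>w. \<beta> v w))"

definition tril ::
  "('k::field \<Rightarrow> 'u::ab_group_add \<Rightarrow> 'u) \<Rightarrow> ('k \<Rightarrow> 'v::ab_group_add \<Rightarrow> 'v)
     \<Rightarrow> ('k \<Rightarrow> 'w::ab_group_add \<Rightarrow> 'w) \<Rightarrow> ('u \<Rightarrow> 'v \<Rightarrow> 'w \<Rightarrow> 'k) \<Rightarrow> bool" where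
  "tril sU sV sW \<gamma> \<longleftrightarrow> (\<forall>v w. klin sU (\<lambda>u. \<gamma> u v w)) \<and> (\<forall>u w. klin sV (\<lambda>v. \<gamma> u v w))
      \<and> (\<forall>u v. klin sW (\<lambda>w. \<gamma> u v w))"

type_synonym ('v, 'w, 'k) tensor2 = "('v \<Rightarrow> 'w \<Rightarrow> 'k) \<Rightarrow> 'k"
type_synonym ('u, 'v, 'w, 'k) tensor3 = "('u \<Rightarrow> 'v \<Rightarrow> 'w \<Rightarrow> 'k) \<Rightarrow> 'k"

definition tens2 ::
  "('k::field \<Rightarrow> 'v::ab_group_add \<Rightarrow> 'v) \<Rightarrow> ('k \<Rightarrow> 'w::ab_group_add \<Rightarrow> 'w)
     \<Rightarrow> 'v \<Rightarrow> 'w \<Rightarrow> ('v, 'w, 'k) tensor2" where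
  "tens2 sV sW v w = (\<lambda>\<beta>. if bil sV sW \<beta> then \<beta> v w else 0)"

definition tens3 ::
  "('k::field \<Rightarrow> 'u::ab_group_add \<Rightarrow> 'u) \<Rightarrow> ('k \<Rightarrow> 'v::ab_group_add \<Rightarrow> 'v)
     \<Rightarrow> ('k \<Rightarrow> 'w::ab_group_add \<Rightarrow> 'w) \<Rightarrow> 'u \<Rightarrow> 'v \<Rightarrow> 'w \<Rightarrow> ('u, 'v, 'w, 'k) tensor3" where
  "tens3 sU sV sW u v w = (\<lambda>\<gamma>. if tril sU sV sW \<gamma> then \<gamma> u v w else 0)"

definition TS2 ::
  "('k::field \<Rightarrow> 'v::ab_group_add \<Rightarrow> 'v) \<Rightarrow> ('k \<Rightarrow> 'w::ab_group_add \<Rightarrow> 'w)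
     \<Rightarrow> ('v, 'w, 'k) tensor2 set" where
  "TS2 sV sW = {x. \<exists>xs. x = (\<Sum>(v, w)\<leftarrow>xs. tens2 sV sW v w)}"

definition tsc :: "'k::field \<Rightarrow> ('g \<Rightarrow> 'k) \<Rightarrow> ('g \<Rightarrow> 'k)" where
  "tsc c x = (\<lambda>\<Gamma>. c * x \<Gamma>)"

text \<open>The linear map V \<otimes> W \<rightarrow> T induced by a bilinear map \<phi> : V \<times> W \<rightarrow> T, where T is
 again a tensor space (so its elements are functionals): x'\<otimes>x'' \<mapsto> \<phi> x' x''.\<close>
definition lift :: "('v \<Rightarrow> 'w \<Rightarrow> 'g \<Rightarrow> 'k) \<Rightarrow> ('v, 'w, 'k) tensor2 \<Rightarrow> 'g \<Rightarrow> 'k" where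
  "lift \<phi> x = (\<lambda>\<Gamma>. x (\<lambda>v w. \<phi> v w \<Gamma>))"

definition flip ::
  "('k::field \<Rightarrow> 'v::ab_group_add \<Rightarrow> 'v) \<Rightarrow> ('k \<Rightarrow> 'w::ab_group_add \<Rightarrow> 'w)
     \<Rightarrow> ('v, 'w, 'k) tensor2 \<Rightarrow> ('w, 'v, 'k) tensor2" where
  "flip sV sW x = lift (\<lambda>v w. tens2 sW sV w v) x"

definition k_algebra :: "('k::field \<Rightarrow> 'a::ring_1 \<Rightarrow> 'a) \<Rightarrow> bool" where
  "k_algebra sA \<longleftrightarrow> Vector_Spaces.vector_space sA \<and>
     (\<forall>c a b. sA c (a * b) = sA c a * b \<and> sA c (a * b) = a * sA c b)"

text \<open>E is an A-bimodule (with k acting centrally, i.e. the induced left and right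
 k-actions agree).\<close>
definition bimodule ::
  "('k::field \<Rightarrow> 'a::ring_1 \<Rightarrow> 'a) \<Rightarrow> ('a \<Rightarrow> 'e::ab_group_add \<Rightarrow> 'e) \<Rightarrow> ('e \<Rightarrow> 'a \<Rightarrow> 'e) \<Rightarrow> bool" where
  "bimodule sA lm rm \<longleftrightarrow>
     (\<forall>a x y. lm a (x + y) = lm a x + lm a y) \<and> (\<forall>a b x. lm (a + b) x = lm a x + lm b x) \<and>
     (\<forall>a b x. lm (a * b) x = lm a (lm b x)) \<and> (\<forall>x. lm 1 x = x) \<and>
     (\<forall>a x y. rm (x + y) a = rm x a + rm y a) \<and> (\<forall>a b x. rm x (a + b) = rm x a + rm x b) \<and>
     (\<forall>a b x. rm x (a * b) = rm (rm x a) b) \<and> (\<forall>x. rm x 1 = x) \<and>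
     (\<forall>a b x. lm a (rm x b) = rm (lm a x) b) \<and>
     (\<forall>c x. lm (sA c 1) x = rm x (sA c 1))"

definition sE :: "('k::field \<Rightarrow> 'a::ring_1 \<Rightarrow> 'a) \<Rightarrow> ('a \<Rightarrow> 'e \<Rightarrow> 'e) \<Rightarrow> 'k \<Rightarrow> 'e \<Rightarrow> 'e" where
  "sE sA lm c x = lm (sA c 1) x"

definition derivation ::
  "('k::field \<Rightarrow> 'a::ring_1 \<Rightarrow> 'a) \<Rightarrow> ('a \<Rightarrow> 'e::ab_group_add \<Rightarrow> 'e) \<Rightarrow> ('e \<Rightarrow> 'a \<Rightarrow> 'e)
     \<Rightarrow> ('a \<Rightarrow> 'e) \<Rightarrow> bool" where
  "derivation sA lm rm d \<longleftrightarrow>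
     (\<forall>a b. d (a + b) = d a + d b) \<and> (\<forall>c a. d (sA c a) = sE sA lm c (d a)) \<and>
     (\<forall>a b. d (a * b) = rm (d a) b + lm a (d b))"

definition outAA :: "('k::field \<Rightarrow> 'a::ring_1 \<Rightarrow> 'a) \<Rightarrow> 'a \<Rightarrow> ('a, 'a, 'k) tensor2 \<Rightarrow> 'a
     \<Rightarrow> ('a, 'a, 'k) tensor2" where
  "outAA sA a x b = lift (\<lambda>p q. tens2 sA sA (a * p) (q * b)) x"

definition innAA :: "('k::field \<Rightarrow> 'a::ring_1 \<Rightarrow> 'a) \<Rightarrow> 'a \<Rightarrow> ('a, 'a, 'k) tensor2 \<Rightarrow> 'a
     \<Rightarrow> ('a, 'a, 'k) tensor2" where
  "innAA sA a x b = lift (\<lambda>p q. tens2 sA sA (p * b) (a * q)) x"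

type_synonym ('a, 'e, 'k) deg1 = "('e, 'a, 'k) tensor2 \<times> ('a, 'e, 'k) tensor2"
  \<comment> \<open>E \<otimes> A \<oplus> A \<otimes> E, the degree one part of T_A E \<otimes> T_A E\<close>
type_synonym ('a, 'e, 'k) deg1_3 =
  "('e, 'a, 'a, 'k) tensor3 \<times> ('a, 'e, 'a, 'k) tensor3 \<times> ('a, 'a, 'e, 'k) tensor3"
  \<comment> \<open>E \<otimes> A \<otimes> A \<oplus> A \<otimes> E \<otimes> A \<oplus> A \<otimes> A \<otimes> E, the degree one part of (T_A E)^{\<otimes>3}\<close>

definition dAA :: "('k::field \<Rightarrow> 'a::ring_1 \<Rightarrow> 'a) \<Rightarrow> ('a \<Rightarrow> 'e::ab_group_add \<Rightarrow> 'e) \<Rightarrow> ('a \<Rightarrow> 'e)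
     \<Rightarrow> ('a, 'a, 'k) tensor2 \<Rightarrow> ('a, 'e, 'k) deg1" where
  "dAA sA lm d x =
     (lift (\<lambda>p q. tens2 (sE sA lm) sA (d p) q) x, lift (\<lambda>p q. tens2 sA (sE sA lm) p (d q)) x)"

definition sig1 :: "('k::field \<Rightarrow> 'a::ring_1 \<Rightarrow> 'a) \<Rightarrow> ('a \<Rightarrow> 'e::ab_group_add \<Rightarrow> 'e)
     \<Rightarrow> ('a, 'e, 'k) deg1 \<Rightarrow> ('a, 'e, 'k) deg1" where
  "sig1 sA lm x = (flip sA (sE sA lm) (snd x), flip (sE sA lm) sA (fst x))"

definition lmul1 :: "('k::field \<Rightarrow> 'a::ring_1 \<Rightarrow> 'a) \<Rightarrow> ('a \<Rightarrow> 'e::ab_group_add \<Rightarrow> 'e)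
     \<Rightarrow> 'a \<Rightarrow> ('a, 'e, 'k) deg1 \<Rightarrow> ('a, 'e, 'k) deg1" where
  "lmul1 sA lm a x =
     (lift (\<lambda>f b. tens2 (sE sA lm) sA (lm a f) b) (fst x),
      lift (\<lambda>b f. tens2 sA (sE sA lm) (a * b) f) (snd x))"

definition rmul1 :: "('k::field \<Rightarrow> 'a::ring_1 \<Rightarrow> 'a) \<Rightarrow> ('a \<Rightarrow> 'e::ab_group_add \<Rightarrow> 'e)
     \<Rightarrow> ('e \<Rightarrow> 'a \<Rightarrow> 'e) \<Rightarrow> ('a, 'e, 'k) deg1 \<Rightarrow> 'a \<Rightarrow> ('a, 'e, 'k) deg1" where
  "rmul1 sA lm rm x a =
     (lift (\<lambda>f b. tens2 (sE sA lm) sA f (b * a)) (fst x),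
      lift (\<lambda>b f. tens2 sA (sE sA lm) b (rm f a)) (snd x))"

definition Emul_left :: "('k::field \<Rightarrow> 'a::ring_1 \<Rightarrow> 'a) \<Rightarrow> ('a \<Rightarrow> 'e::ab_group_add \<Rightarrow> 'e)
     \<Rightarrow> ('e \<Rightarrow> 'a \<Rightarrow> 'e) \<Rightarrow> 'e \<Rightarrow> ('a, 'a, 'k) tensor2 \<Rightarrow> ('a, 'e, 'k) deg1" where
  "Emul_left sA lm rm f y = (lift (\<lambda>p q. tens2 (sE sA lm) sA (rm f p) q) y, 0)"

definition Emul_right :: "('k::field \<Rightarrow> 'a::ring_1 \<Rightarrow> 'a) \<Rightarrow> ('a \<Rightarrow> 'e::ab_group_add \<Rightarrow> 'e)
     \<Rightarrow> ('a, 'a, 'k) tensor2 \<Rightarrow> 'e \<Rightarrow> ('a, 'e, 'k) deg1" where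
  "Emul_right sA lm y f = (0, lift (\<lambda>p q. tens2 sA (sE sA lm) p (lm q f)) y)"

definition pairL2 ::
  "('k::field \<Rightarrow> 'a::ring_1 \<Rightarrow> 'a) \<Rightarrow> ('e \<Rightarrow> 'e \<Rightarrow> ('a, 'a, 'k) tensor2)
     \<Rightarrow> 'e \<Rightarrow> ('a, 'e, 'k) deg1 \<Rightarrow> ('a, 'a, 'a, 'k) tensor3" where
  \<comment> \<open>\<langle>\<langle>e, f\<otimes>a\<rangle>\<rangle>_L = \<langle>\<langle>e,f\<rangle>\<rangle> \<otimes> a,  \<langle>\<langle>e, a\<otimes>f\<rangle>\<rangle>_L = 0\<close>
  "pairL2 sA pr e x = lift (\<lambda>f a. lift (\<lambda>p q. tens3 sA sA sA p q a) (pr e f)) (fst x)"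

definition pairR2 ::
  "('k::field \<Rightarrow> 'a::ring_1 \<Rightarrow> 'a) \<Rightarrow> ('e \<Rightarrow> 'e \<Rightarrow> ('a, 'a, 'k) tensor2)
     \<Rightarrow> 'e \<Rightarrow> ('a, 'e, 'k) deg1 \<Rightarrow> ('a, 'a, 'a, 'k) tensor3" where
  \<comment> \<open>\<langle>\<langle>e, a\<otimes>f\<rangle>\<rangle>_R = a \<otimes> \<langle>\<langle>e,f\<rangle>\<rangle>,  \<langle>\<langle>e, f\<otimes>a\<rangle>\<rangle>_R = 0\<close>
  "pairR2 sA pr e x = lift (\<lambda>a f. lift (\<lambda>p q. tens3 sA sA sA a p q) (pr e f)) (snd x)"

definition pairL1 ::
  "('k::field \<Rightarrow> 'a::ring_1 \<Rightarrow> 'a) \<Rightarrow> ('e \<Rightarrow> 'e \<Rightarrow> ('a, 'a, 'k) tensor2)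
     \<Rightarrow> ('a, 'e, 'k) deg1 \<Rightarrow> 'e \<Rightarrow> ('a, 'a, 'a, 'k) tensor3" where
  \<comment> \<open>\<langle>\<langle>e\<otimes>a, f\<rangle>\<rangle>_L = \<langle>\<langle>e,f\<rangle>\<rangle>' \<otimes> a \<otimes> \<langle>\<langle>e,f\<rangle>\<rangle>'',  \<langle>\<langle>a\<otimes>e, f\<rangle>\<rangle>_L = 0\<close>
  "pairL1 sA pr x g = lift (\<lambda>e a. lift (\<lambda>p q. tens3 sA sA sA p a q) (pr e g)) (fst x)"

definition brL2 ::
  "('k::field \<Rightarrow> 'a::ring_1 \<Rightarrow> 'a) \<Rightarrow> ('a \<Rightarrow> 'e::ab_group_add \<Rightarrow> 'e) \<Rightarrow> ('a \<Rightarrow> 'e)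
     \<Rightarrow> ('e \<Rightarrow> 'e \<Rightarrow> ('a, 'a, 'k) tensor2) \<Rightarrow> ('e \<Rightarrow> 'e \<Rightarrow> ('a, 'e, 'k) deg1)
     \<Rightarrow> 'e \<Rightarrow> ('a, 'e, 'k) deg1 \<Rightarrow> ('a, 'e, 'k) deg1_3" where
  \<comment> \<open>[[e, f\<otimes>a]]_L = [[e,f]] \<otimes> a,  [[e, a\<otimes>f]]_L = \<langle>\<langle>e,\<partial>a\<rangle>\<rangle> \<otimes> f\<close>
  "brL2 sA lm d pr br e x =
    (let sEE = sE sA lm in
     (lift (\<lambda>f a. lift (\<lambda>p q. tens3 sEE sA sA p q a) (fst (br e f))) (fst x),
      lift (\<lambda>f a. lift (\<lambda>p q. tens3 sA sEE sA p q a) (snd (br e f))) (fst x),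
      lift (\<lambda>a f. lift (\<lambda>p q. tens3 sA sA sEE p q f) (pr e (d a))) (snd x)))"

definition brR2 ::
  "('k::field \<Rightarrow> 'a::ring_1 \<Rightarrow> 'a) \<Rightarrow> ('a \<Rightarrow> 'e::ab_group_add \<Rightarrow> 'e) \<Rightarrow> ('a \<Rightarrow> 'e)
     \<Rightarrow> ('e \<Rightarrow> 'e \<Rightarrow> ('a, 'a, 'k) tensor2) \<Rightarrow> ('e \<Rightarrow> 'e \<Rightarrow> ('a, 'e, 'k) deg1)
     \<Rightarrow> 'e \<Rightarrow> ('a, 'e, 'k) deg1 \<Rightarrow> ('a, 'e, 'k) deg1_3" where
  \<comment> \<open>[[e, f\<otimes>a]]_R = f \<otimes> \<langle>\<langle>e,\<partial>a\<rangle>\<rangle>,  [[e, a\<otimes>f]]_R = a \<otimes> [[e,f]]\<close>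
  "brR2 sA lm d pr br e x =
    (let sEE = sE sA lm in
     (lift (\<lambda>f a. lift (\<lambda>p q. tens3 sEE sA sA f p q) (pr e (d a))) (fst x),
      lift (\<lambda>a f. lift (\<lambda>p q. tens3 sA sEE sA a p q) (fst (br e f))) (snd x),
      lift (\<lambda>a f. lift (\<lambda>p q. tens3 sA sA sEE a p q) (snd (br e f))) (snd x)))"

definition brL1 ::
  "('k::field \<Rightarrow> 'a::ring_1 \<Rightarrow> 'a) \<Rightarrow> ('a \<Rightarrow> 'e::ab_group_add \<Rightarrow> 'e) \<Rightarrow> ('a \<Rightarrow> 'e)
     \<Rightarrow> ('e \<Rightarrow> 'e \<Rightarrow> ('a, 'a, 'k) tensor2) \<Rightarrow> ('e \<Rightarrow> 'e \<Rightarrow> ('a, 'e, 'k) deg1)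
     \<Rightarrow> ('a, 'e, 'k) deg1 \<Rightarrow> 'e \<Rightarrow> ('a, 'e, 'k) deg1_3" where
  \<comment> \<open>[[e\<otimes>a, f]]_L = [[e,f]] \<otimes>_1 a + \<langle>\<langle>e,f\<rangle>\<rangle> \<otimes>_1 \<partial>a,  [[a\<otimes>e, f]]_L = - \<langle>\<langle>\<partial>a,f\<rangle>\<rangle> \<otimes>_1 e\<close>
  "brL1 sA lm d pr br x g =
    (let sEE = sE sA lm in
     (lift (\<lambda>e a. lift (\<lambda>p q. tens3 sEE sA sA p a q) (fst (br e g))) (fst x),
      lift (\<lambda>e a. lift (\<lambda>p q. tens3 sA sEE sA p (d a) q) (pr e g)) (fst x)
        - lift (\<lambda>a e. lift (\<lambda>p q. tens3 sA sEE sA p e q) (pr (d a) g)) (snd x),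
      lift (\<lambda>e a. lift (\<lambda>p q. tens3 sA sA sEE p a q) (snd (br e g))) (fst x)))"

definition sym_pairing ::
  "('k::field \<Rightarrow> 'a::ring_1 \<Rightarrow> 'a) \<Rightarrow> ('a \<Rightarrow> 'e::ab_group_add \<Rightarrow> 'e) \<Rightarrow> ('e \<Rightarrow> 'a \<Rightarrow> 'e)
     \<Rightarrow> ('e \<Rightarrow> 'e \<Rightarrow> ('a, 'a, 'k) tensor2) \<Rightarrow> bool" where
  "sym_pairing sA lm rm pr \<longleftrightarrow>
     (\<forall>e f. pr e f \<in> TS2 sA sA) \<and>
     (\<forall>e f g. pr e (f + g) = pr e f + pr e g) \<and>
     (\<forall>e f g. pr (f + g) e = pr f e + pr g e) \<and>
     (\<forall>c e f. pr e (sE sA lm c f) = tsc c (pr e f)) \<and>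
     (\<forall>c e f. pr (sE sA lm c f) e = tsc c (pr f e)) \<and>
     (\<forall>e f a b. pr e (lm a (rm f b)) = outAA sA a (pr e f) b) \<and>
     (\<forall>e f a b. pr (lm a (rm f b)) e = innAA sA a (pr f e) b) \<and>
     (\<forall>e f. pr e f = flip sA sA (pr f e))"

text \<open>br e f = [[e,f]] = ([[e,f]]_l, [[e,f]]_r) \<in> E \<otimes> A \<oplus> A \<otimes> E, the restriction of the
 (k-linear, degree -1) double Courant--Dorfman bracket to E \<otimes> E; on the remaining
 degree \<le> 1 arguments it is given by [[e,a]] = \<langle>\<langle>e,\<partial>a\<rangle>\<rangle>, [[a,e]] = -\<langle>\<langle>\<partial>a,e\<rangle>\<rangle>, [[a,b]] = 0.\<close>
definition dCD_bracket ::
  "('k::field \<Rightarrow> 'a::ring_1 \<Rightarrow> 'a) \<Rightarrow> ('a \<Rightarrow> 'e::ab_group_add \<Rightarrow> 'e)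
     \<Rightarrow> ('e \<Rightarrow> 'e \<Rightarrow> ('a, 'e, 'k) deg1) \<Rightarrow> bool" where
  "dCD_bracket sA lm br \<longleftrightarrow>
     (\<forall>e f. br e f \<in> TS2 (sE sA lm) sA \<times> TS2 sA (sE sA lm)) \<and>
     (\<forall>e f g. br e (f + g) = br e f + br e g) \<and>
     (\<forall>e f g. br (f + g) e = br f e + br g e) \<and>
     (\<forall>c e f. br e (sE sA lm c f) = (tsc c (fst (br e f)), tsc c (snd (br e f)))) \<and>
     (\<forall>c e f. br (sE sA lm c f) e = (tsc c (fst (br f e)), tsc c (snd (br f e))))"

definition double_CD_algebra ::
  "('k::field_char_0 \<Rightarrow> 'a::ring_1 \<Rightarrow> 'a) \<Rightarrow> ('a \<Rightarrow> 'e::ab_group_add \<Rightarrow> 'e) \<Rightarrow> ('e \<Rightarrow> 'a \<Rightarrow> 'e)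
     \<Rightarrow> ('e \<Rightarrow> 'e \<Rightarrow> ('a, 'a, 'k) tensor2) \<Rightarrow> ('a \<Rightarrow> 'e)
     \<Rightarrow> ('e \<Rightarrow> 'e \<Rightarrow> ('a, 'e, 'k) deg1) \<Rightarrow> bool" where
  "double_CD_algebra sA lm rm pr d br \<longleftrightarrow>
     k_algebra sA \<and> bimodule sA lm rm \<and> sym_pairing sA lm rm pr \<and>
     derivation sA lm rm d \<and> dCD_bracket sA lm br \<and>
     (\<forall>e f. dAA sA lm d (pr e f) = br e f + sig1 sA lm (br f e)) \<and>
     (\<forall>a e. br (d a) e = 0) \<and>
     (\<forall>a b. pr (d a) (d b) = 0) \<and>
     (\<forall>e f a. br e (rm f a) = rmul1 sA lm rm (br e f) a + Emul_left sA lm rm f (pr e (d a))) \<and>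
     (\<forall>e f a. br e (lm a f) = lmul1 sA lm a (br e f) + Emul_right sA lm (pr e (d a)) f) \<and>
     (\<forall>e f g. brL2 sA lm d pr br e (br f g)
              = brR2 sA lm d pr br f (br e g) + brL1 sA lm d pr br (br e f) g) \<and>
     (\<forall>e f g. pairL2 sA pr e (dAA sA lm d (pr f g))
              = pairR2 sA pr f (br e g) + pairL1 sA pr (br e f) g)"

end

theory Submission
  imports Defs
begin

text \<open>Apply the cyclic rotation \<open>x\<otimes>y\<otimes>z \<mapsto> z\<otimes>x\<otimes>y\<close> of \<open>A\<^sup>\<otimes>\<^sup>3\<close> to the invariance axiom
  \<open>\<langle>\<langle>f,\<partial>\<langle>\<langle>g,e\<rangle>\<rangle>\<rangle>\<rangle>\<^sub>L = \<langle>\<langle>g,[[f,e]]\<rangle>\<rangle>\<^sub>R + \<langle>\<langle>[[f,g]],e\<rangle>\<rangle>\<^sub>L\<close>. By symmetry of the pairing the rotation turns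
  \<open>\<langle>\<langle>[[f,g]],e\<rangle>\<rangle>\<^sub>L\<close> into \<open>\<langle>\<langle>e,[[f,g]]\<rangle>\<rangle>\<^sub>L\<close>, \<open>\<langle>\<langle>f,\<partial>\<langle>\<langle>g,e\<rangle>\<rangle>\<rangle>\<rangle>\<^sub>L\<close> into \<open>\<langle>\<langle>f,\<partial>\<langle>\<langle>e,g\<rangle>\<rangle>\<rangle>\<rangle>\<^sub>R\<close>, and
  \<open>\<langle>\<langle>g,[[f,e]]\<rangle>\<rangle>\<^sub>R\<close> into \<open>\<langle>\<langle>[[f,e]]\<^sup>\<sigma>,g\<rangle>\<rangle>\<^sub>L\<close>; the axiom \<open>\<partial>\<langle>\<langle>e,f\<rangle>\<rangle> = [[e,f]] + [[f,e]]\<^sup>\<sigma>\<close> rewrites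
  the last one as \<open>\<langle>\<langle>\<partial>\<langle>\<langle>e,f\<rangle>\<rangle>,g\<rangle>\<rangle>\<^sub>L - \<langle>\<langle>[[e,f]],g\<rangle>\<rangle>\<^sub>L\<close>.\<close>

text \<open>A tensor evaluates to \<open>0\<close> on forms that are not bilinear, hence the bilinearity side
  conditions whenever \<open>lift\<close> is computed on pure or flipped tensors.\<close>

lemma lift_tens2:
  assumes "\<And>\<Gamma>. bil sV sW (\<lambda>v w. \<phi> v w \<Gamma>)"
  shows "lift \<phi> (tens2 sV sW v w) = \<phi> v w"
  using assms by (simp add: lift_def tens2_def)

lemma lift_flip:
  assumes "\<And>\<Gamma>. bil sW sV (\<lambda>w v. \<phi> w v \<Gamma>)"
  shows "lift \<phi> (flip sV sW x) = lift (\<lambda>v w. \<phi> w v) x"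
  using assms by (simp add: flip_def lift_def tens2_def)

lemma lift_lift: "lift \<phi> (lift \<chi> x) = lift (\<lambda>v w. lift \<phi> (\<chi> v w)) x"
  by (simp add: lift_def)

lemma lift_cong: "(\<And>v w. \<phi> v w = \<psi> v w) \<Longrightarrow> lift \<phi> x = lift \<psi> x"
  by (simp add: lift_def)

lemma lift_diff: "lift \<phi> (x - y) = lift \<phi> x - lift \<phi> y"
  by (simp add: lift_def fun_eq_iff)

lemma TS2_eval:
  assumes "x \<in> TS2 sV sW"
  obtains xs where "\<And>\<beta>. bil sV sW \<beta> \<Longrightarrow> x \<beta> = (\<Sum>(v, w)\<leftarrow>xs. \<beta> v w)"
proof -
  obtain xs where x: "x = (\<Sum>(v, w)\<leftarrow>xs. tens2 sV sW v w)"
    using assms by (auto simp: TS2_def)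
  have "bil sV sW \<beta> \<Longrightarrow> (\<Sum>(v, w)\<leftarrow>xs. tens2 sV sW v w) \<beta> = (\<Sum>(v, w)\<leftarrow>xs. \<beta> v w)" for \<beta>
    by (induction xs) (auto simp: tens2_def)
  with x that show ?thesis by blast
qed

lemma klin_lift_TS2:
  assumes "x \<in> TS2 sV sW"
    and "\<And>a. bil sV sW (\<lambda>v w. \<phi> a v w \<Gamma>)"
    and "\<And>v w. klin sX (\<lambda>a. \<phi> a v w \<Gamma>)"
  shows "klin sX (\<lambda>a. lift (\<phi> a) x \<Gamma>)"
proof -
  obtain xs where xs: "\<And>\<beta>. bil sV sW \<beta> \<Longrightarrow> x \<beta> = (\<Sum>(v, w)\<leftarrow>xs. \<beta> v w)"
    using TS2_eval[OF assms(1)] by blast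
  have "\<phi> (a + b) v w \<Gamma> = \<phi> a v w \<Gamma> + \<phi> b v w \<Gamma>" "\<phi> (sX c a) v w \<Gamma> = c * \<phi> a v w \<Gamma>"
    for a b c v w
    using assms(3) by (simp_all add: klin_def)
  then show ?thesis
    by (simp add: klin_def lift_def xs assms(2) case_prod_unfold sum_list_addf
        sum_list_const_mult)
qed

lemma tril_tens3: "tril sU sV sW (\<lambda>u v w. tens3 sU sV sW u v w \<Gamma>)"
proof (cases "tril sU sV sW \<Gamma>")
  case False
  then have "(\<lambda>u v w. tens3 sU sV sW u v w \<Gamma>) = (\<lambda>u v w. 0)"
    by (simp add: tens3_def)
  then show ?thesis by (simp add: tril_def klin_def)
qed (simp add: tens3_def)

lemma klin_tens3:
  "klin sU (\<lambda>u. tens3 sU sV sW u v w \<Gamma>)"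
  "klin sV (\<lambda>v. tens3 sU sV sW u v w \<Gamma>)"
  "klin sW (\<lambda>w. tens3 sU sV sW u v w \<Gamma>)"
  using tril_tens3[of sU sV sW] by (simp_all add: tril_def)

lemma bil_tens3:
  "bil sU sV (\<lambda>u v. tens3 sU sV sW u v w \<Gamma>)"
  "bil sV sU (\<lambda>v u. tens3 sU sV sW u v w \<Gamma>)"
  "bil sU sW (\<lambda>u w. tens3 sU sV sW u v w \<Gamma>)"
  "bil sW sU (\<lambda>w u. tens3 sU sV sW u v w \<Gamma>)"
  "bil sV sW (\<lambda>v w. tens3 sU sV sW u v w \<Gamma>)"
  "bil sW sV (\<lambda>w v. tens3 sU sV sW u v w \<Gamma>)"
  by (simp_all add: bil_def klin_tens3)

definition rotate3 :: "('u, 'u, 'u, 'k) tensor3 \<Rightarrow> ('u, 'u, 'u, 'k) tensor3" where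
  "rotate3 X = (\<lambda>\<gamma>. X (\<lambda>u v w. \<gamma> w u v))"

lemma tril_rotate: "tril s s s (\<lambda>u v w. \<gamma> w u v) = tril s s s \<gamma>"
  unfolding tril_def by blast

lemma rotate3_tens3: "rotate3 (tens3 s s s u v w) = tens3 s s s w u v"
proof
  fix \<gamma>
  show "rotate3 (tens3 s s s u v w) \<gamma> = tens3 s s s w u v \<gamma>"
    unfolding rotate3_def tens3_def tril_rotate[of s \<gamma>] by simp
qed

lemma rotate3_lift: "rotate3 (lift \<phi> x) = lift (\<lambda>v w. rotate3 (\<phi> v w)) x"
  by (simp add: rotate3_def lift_def)

lemma rotate3_diff: "rotate3 (X - Y) = rotate3 X - rotate3 Y"
  and rotate3_zero: "rotate3 0 = 0"
  by (simp_all add: rotate3_def fun_eq_iff)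

lemma sym_pairingD:
  assumes "sym_pairing sA lm rm pr"
  shows pairing_TS2: "pr e f \<in> TS2 sA sA"
    and pairing_add_left: "pr (f + g) e = pr f e + pr g e"
    and pairing_add_right: "pr e (f + g) = pr e f + pr e g"
    and pairing_scale_left: "pr (sE sA lm c f) e = tsc c (pr f e)"
    and pairing_scale_right: "pr e (sE sA lm c f) = tsc c (pr e f)"
    and pairing_flip: "pr e f = flip sA sA (pr f e)"
  using assms unfolding sym_pairing_def by meson+

lemma klin_lift_pairing_left:
  assumes "sym_pairing sA lm rm pr"
  shows "klin (sE sA lm) (\<lambda>h. lift \<phi> (pr h g) \<Gamma>)"
  using assms by (simp add: klin_def pairing_add_left pairing_scale_left lift_def tsc_def)

lemma klin_lift_pairing_right:
  assumes "sym_pairing sA lm rm pr"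
  shows "klin (sE sA lm) (\<lambda>h. lift \<phi> (pr g h) \<Gamma>)"
  using assms by (simp add: klin_def pairing_add_right pairing_scale_right lift_def tsc_def)

lemma lift_pairing_swap:
  assumes "sym_pairing sA lm rm pr" and "\<And>\<Gamma>. bil sA sA (\<lambda>v w. \<phi> v w \<Gamma>)"
  shows "lift \<phi> (pr f e) = lift (\<lambda>v w. \<phi> w v) (pr e f)"
  by (subst pairing_flip[OF assms(1)]) (rule lift_flip[OF assms(2)])

lemma pairL1_diff: "pairL1 sA pr (X - Y) g = pairL1 sA pr X g - pairL1 sA pr Y g"
  by (simp add: pairL1_def lift_diff)

lemma rotate3_pairL1:
  assumes "sym_pairing sA lm rm pr"
  shows "rotate3 (pairL1 sA pr X e) = pairL2 sA pr e X"
  unfolding pairL1_def pairL2_def rotate3_lift rotate3_tens3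
  by (rule lift_cong, rule lift_pairing_swap[OF assms], rule bil_tens3)

lemma rotate3_pairR2:
  assumes "sym_pairing sA lm rm pr"
  shows "rotate3 (pairR2 sA pr g Y) = pairL1 sA pr (sig1 sA lm Y) g"
proof -
  have bil_slot: "bil (sE sA lm) sA (\<lambda>h a. lift (\<lambda>p q. tens3 sA sA sA p a q) (pr h g) \<Gamma>)" for \<Gamma>
    unfolding bil_def
    by (intro conjI allI klin_lift_pairing_left[OF assms]
        klin_lift_TS2[OF pairing_TS2[OF assms]] bil_tens3 klin_tens3)
  have "rotate3 (pairR2 sA pr g Y)
      = lift (\<lambda>a h. lift (\<lambda>p q. tens3 sA sA sA q a p) (pr g h)) (snd Y)"
    by (simp add: pairR2_def rotate3_lift rotate3_tens3)
  also have "\<dots> = lift (\<lambda>a h. lift (\<lambda>p q. tens3 sA sA sA p a q) (pr h g)) (snd Y)"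
    by (rule lift_cong, rule lift_pairing_swap[OF assms], rule bil_tens3)
  also have "\<dots> = lift (\<lambda>h a. lift (\<lambda>p q. tens3 sA sA sA p a q) (pr h g))
                     (flip sA (sE sA lm) (snd Y))"
    by (rule lift_flip[OF bil_slot, symmetric])
  also have "\<dots> = pairL1 sA pr (sig1 sA lm Y) g"
    by (simp add: pairL1_def sig1_def)
  finally show ?thesis .
qed

lemma derivationD:
  assumes "derivation sA lm rm d"
  shows derivation_add: "d (a + b) = d a + d b"
    and derivation_scale: "d (sA c a) = sE sA lm c (d a)"
  using assms by (simp_all add: derivation_def)

lemma klin_lift_pairing_derivation:
  assumes "sym_pairing sA lm rm pr" and "derivation sA lm rm d"
  shows "klin sA (\<lambda>a. lift \<phi> (pr g (d a)) \<Gamma>)"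
  using assms by (simp add: klin_def derivation_add derivation_scale pairing_add_right
      pairing_scale_right lift_def tsc_def)

lemma pairL2_dAA:
  assumes "sym_pairing sA lm rm pr"
  shows "pairL2 sA pr f (dAA sA lm d x)
    = lift (\<lambda>p q. lift (\<lambda>u v. tens3 sA sA sA u v q) (pr f (d p))) x"
proof -
  have "bil (sE sA lm) sA (\<lambda>h a. lift (\<lambda>u v. tens3 sA sA sA u v a) (pr f h) \<Gamma>)" for \<Gamma>
    unfolding bil_def
    by (intro conjI allI klin_lift_pairing_right[OF assms]
        klin_lift_TS2[OF pairing_TS2[OF assms]] bil_tens3 klin_tens3)
  then show ?thesis
    by (simp add: pairL2_def dAA_def lift_lift lift_tens2)
qed

lemma pairR2_dAA:
  assumes "sym_pairing sA lm rm pr"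
  shows "pairR2 sA pr f (dAA sA lm d x)
    = lift (\<lambda>p q. lift (\<lambda>u v. tens3 sA sA sA p u v) (pr f (d q))) x"
proof -
  have "bil sA (sE sA lm) (\<lambda>a h. lift (\<lambda>u v. tens3 sA sA sA a u v) (pr f h) \<Gamma>)" for \<Gamma>
    unfolding bil_def
    by (intro conjI allI klin_lift_pairing_right[OF assms]
        klin_lift_TS2[OF pairing_TS2[OF assms]] bil_tens3 klin_tens3)
  then show ?thesis
    by (simp add: pairR2_def dAA_def lift_lift lift_tens2)
qed

lemma rotate3_pairL2_dAA:
  assumes "sym_pairing sA lm rm pr" and "derivation sA lm rm d"
  shows "rotate3 (pairL2 sA pr f (dAA sA lm d (pr g e)))
    = pairR2 sA pr f (dAA sA lm d (pr e g))"
proof -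
  have bil_slot: "bil sA sA (\<lambda>p q. lift (\<lambda>u v. tens3 sA sA sA q u v) (pr f (d p)) \<Gamma>)" for \<Gamma>
    unfolding bil_def
    by (intro conjI allI klin_lift_pairing_derivation[OF assms]
        klin_lift_TS2[OF pairing_TS2[OF assms(1)]] bil_tens3 klin_tens3)
  have "rotate3 (pairL2 sA pr f (dAA sA lm d (pr g e)))
      = lift (\<lambda>p q. lift (\<lambda>u v. tens3 sA sA sA q u v) (pr f (d p))) (pr g e)"
    by (simp add: pairL2_dAA[OF assms(1)] rotate3_lift rotate3_tens3)
  also have "\<dots> = lift (\<lambda>p q. lift (\<lambda>u v. tens3 sA sA sA p u v) (pr f (d q))) (pr e g)"
    by (rule lift_pairing_swap[OF assms(1) bil_slot])
  also have "\<dots> = pairR2 sA pr f (dAA sA lm d (pr e g))"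
    by (simp add: pairR2_dAA[OF assms(1)])
  finally show ?thesis .
qed

lemma double_CD_algebraD:
  assumes "double_CD_algebra sA lm rm pr d br"
  shows "sym_pairing sA lm rm pr"
    and "derivation sA lm rm d"
    and double_CD_d_pairing: "dAA sA lm d (pr e f) = br e f + sig1 sA lm (br f e)"
    and double_CD_pairing_invariance:
      "pairL2 sA pr e (dAA sA lm d (pr f g)) = pairR2 sA pr f (br e g) + pairL1 sA pr (br e f) g"
  using assms unfolding double_CD_algebra_def by meson+

theorem lemmaA1:
  fixes sA :: "'k::field_char_0 \<Rightarrow> 'a::ring_1 \<Rightarrow> 'a"
    and lm :: "'a \<Rightarrow> 'e::ab_group_add \<Rightarrow> 'e" and rm :: "'e \<Rightarrow> 'a \<Rightarrow> 'e"
    and pr :: "'e \<Rightarrow> 'e \<Rightarrow> ('a, 'a, 'k) tensor2" and d :: "'a \<Rightarrow> 'e"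
    and br :: "'e \<Rightarrow> 'e \<Rightarrow> ('a, 'e, 'k) deg1"
  assumes "double_CD_algebra sA lm rm pr d br"
  shows "\<forall>e f g.
           pairL2 sA pr e (br f g) - pairR2 sA pr f (dAA sA lm d (pr e g))
             - pairL1 sA pr (br e f) g + pairL1 sA pr (dAA sA lm d (pr e f)) g = 0"
proof (intro allI)
  fix e f g
  note pairing = double_CD_algebraD(1)[OF assms]
    and derivation = double_CD_algebraD(2)[OF assms]
  have bracket_via_sigma: "pairL1 sA pr (br e f) g
      = pairL1 sA pr (dAA sA lm d (pr e f)) g - pairL1 sA pr (sig1 sA lm (br f e)) g"
    by (simp add: double_CD_d_pairing[OF assms] flip: pairL1_diff)
  have "rotate3 (pairL2 sA pr f (dAA sA lm d (pr g e))
      - pairR2 sA pr g (br f e) - pairL1 sA pr (br f g) e) = 0"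
    by (simp add: double_CD_pairing_invariance[OF assms] rotate3_zero)
  then have "pairR2 sA pr f (dAA sA lm d (pr e g)) - pairL1 sA pr (sig1 sA lm (br f e)) g
      - pairL2 sA pr e (br f g) = 0"
    by (simp add: rotate3_diff rotate3_pairL2_dAA[OF pairing derivation]
        rotate3_pairR2[OF pairing] rotate3_pairL1[OF pairing])
  with bracket_via_sigma show "pairL2 sA pr e (br f g) - pairR2 sA pr f (dAA sA lm d (pr e g))
      - pairL1 sA pr (br e f) g + pairL1 sA pr (dAA sA lm d (pr e f)) g = 0"
    by (simp add: algebra_simps)
qed

end
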